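(* Every polynomial functor on $\mathsf{Nom}$ has a canonical locally monotone extension to $\mathrm{Kl}(\mathcal{P}_{\mathsf{fs}})$.
   Context: Fix a countably infinite set $\mathbb{A}$ of names; $\mathsf{Nom}$ is the category of nominal sets and equivariant maps. $\mathcal{P}_{\mathsf{fs}}$ is the monad of finitely supported subsets on $\mathsf{Nom}$, with unit $x\mapsto\{x\}$ and multiplication union; $\mathrm{Kl}(\mathcal{P}_{\mathsf{fs}})$ is its Kleisli category and $J\colon\mathsf{Nom}\to\mathrm{Kl}(\mathcal{P}_{\mathsf{fs}})$ the canonical functor. Polynomial functors are those generated by the grammar $F::=C\mid\mathrm{Id}\mid F\times F\mid\coprod_{i\in I}F_i$, with $C$ ranging over constant functors and $I$ arbitrary. An extension of $F$ is an endofunctor $\overline{F}$ on $\mathrm{Kl}(\mathcal{P}_{\mathsf{fs}})$ with $\overline{F}J=JF$; locally monotone means monotone on hom-sets ordered pointwise by inclusion. The canonical extension is built along the grammar: constants and identity extend trivially; coproducts via $\overline{F+G}(f)=[T\mathsf{inl},T\mathsf{inr}]\cdot(\overline{F}f+\overline{G}f)$; finite products via the double strength $d\colon TX\times TY\to T(X\times Y)$ of the commutative monad $\mathcal{P}_{\mathsf{fs}}$ (with strength $(x,S)\mapsto\{(x,s):s\in S\}$), i.e. $\overline{F\times G}(f)=d\cdot(\overline{F}f\times\overline{G}f)$. *)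

theory Defs
  imports Main
begin

text \<open>Names: the countably infinite set \<A> is modelled by the type nat.
  Finite permutations of names:\<close>
definition fperm :: "(nat \<Rightarrow> nat) \<Rightarrow> bool" where
  "fperm p \<longleftrightarrow> bij p \<and> finite {a. p a \<noteq> a}"

definition supports :: "((nat \<Rightarrow> nat) \<Rightarrow> 'x \<Rightarrow> 'x) \<Rightarrow> nat set \<Rightarrow> 'x \<Rightarrow> bool" where
  "supports act T x \<longleftrightarrow> (\<forall>p. fperm p \<and> (\<forall>a\<in>T. p a = a) \<longrightarrow> act p x = x)"

definition nominal_set :: "'x set \<Rightarrow> ((nat \<Rightarrow> nat) \<Rightarrow> 'x \<Rightarrow> 'x) \<Rightarrow> bool" where
  "nominal_set X act \<longleftrightarrow>
     (\<forall>x\<in>X. act id x = x) \<and>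
     (\<forall>p q x. fperm p \<and> fperm q \<and> x \<in> X \<longrightarrow> act (p \<circ> q) x = act p (act q x)) \<and>
     (\<forall>p x. fperm p \<and> x \<in> X \<longrightarrow> act p x \<in> X) \<and>
     (\<forall>x\<in>X. \<exists>T. finite T \<and> supports act T x)"

definition equivariant :: "'x set \<Rightarrow> ((nat \<Rightarrow> nat) \<Rightarrow> 'x \<Rightarrow> 'x) \<Rightarrow> 'y set \<Rightarrow>
    ((nat \<Rightarrow> nat) \<Rightarrow> 'y \<Rightarrow> 'y) \<Rightarrow> ('x \<Rightarrow> 'y) \<Rightarrow> bool" where
  "equivariant X ax Y ay h \<longleftrightarrow> (\<forall>x\<in>X. h x \<in> Y) \<and>
     (\<forall>p x. fperm p \<and> x \<in> X \<longrightarrow> h (ax p x) = ay p (h x))"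

definition set_act :: "((nat \<Rightarrow> nat) \<Rightarrow> 'x \<Rightarrow> 'x) \<Rightarrow> (nat \<Rightarrow> nat) \<Rightarrow> 'x set \<Rightarrow> 'x set" where
  "set_act act p S = act p ` S"

definition fs_subset :: "'x set \<Rightarrow> ((nat \<Rightarrow> nat) \<Rightarrow> 'x \<Rightarrow> 'x) \<Rightarrow> 'x set \<Rightarrow> bool" where
  "fs_subset Y act S \<longleftrightarrow> S \<subseteq> Y \<and> (\<exists>T. finite T \<and> supports (set_act act) T S)"

text \<open>Morphisms X \<rightarrow> Y of Kl(P_fs): equivariant maps X \<rightarrow> P_fs(Y).\<close>
definition kl_mor :: "'x set \<Rightarrow> ((nat \<Rightarrow> nat) \<Rightarrow> 'x \<Rightarrow> 'x) \<Rightarrow> 'y set \<Rightarrow>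
    ((nat \<Rightarrow> nat) \<Rightarrow> 'y \<Rightarrow> 'y) \<Rightarrow> ('x \<Rightarrow> 'y set) \<Rightarrow> bool" where
  "kl_mor X ax Y ay f \<longleftrightarrow> (\<forall>x\<in>X. fs_subset Y ay (f x)) \<and>
     (\<forall>p x. fperm p \<and> x \<in> X \<longrightarrow> f (ax p x) = set_act ay p (f x))"

definition kl_id :: "'x \<Rightarrow> 'x set" where "kl_id x = {x}"
definition kl_comp :: "('y \<Rightarrow> 'z set) \<Rightarrow> ('x \<Rightarrow> 'y set) \<Rightarrow> 'x \<Rightarrow> 'z set" where
  "kl_comp g f x = \<Union> (g ` f x)"
definition J :: "('x \<Rightarrow> 'y) \<Rightarrow> 'x \<Rightarrow> 'y set" where "J h x = {h x}"

text \<open>Syntax of polynomial functors.  Constants are nominal subsets of a fixed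
  ambient type 'c (with a fixed action); coproducts are indexed by subsets of 'i.\<close>
datatype ('c, 'i) pf =
    PConstF "'c set" | PIdF | PProdF "('c, 'i) pf" "('c, 'i) pf"
  | PCoprodF "'i set" "'i \<Rightarrow> ('c, 'i) pf"

text \<open>Universe of values of polynomial functors applied to a set of type 'x.\<close>
datatype ('c, 'i, 'x) pv =
    VConst 'c | VVar 'x | VPair "('c, 'i, 'x) pv" "('c, 'i, 'x) pv" | VInj 'i "('c, 'i, 'x) pv"

primrec wf_pf :: "((nat \<Rightarrow> nat) \<Rightarrow> 'c \<Rightarrow> 'c) \<Rightarrow> ('c, 'i) pf \<Rightarrow> bool" where
  "wf_pf ac (PConstF C) = nominal_set C ac"
| "wf_pf ac PIdF = True"
| "wf_pf ac (PProdF F G) = (wf_pf ac F \<and> wf_pf ac G)"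
| "wf_pf ac (PCoprodF I Fs) = (\<forall>i\<in>I. wf_pf ac (Fs i))"

primrec pobj :: "('c, 'i) pf \<Rightarrow> 'x set \<Rightarrow> ('c, 'i, 'x) pv set" where
  "pobj (PConstF C) X = VConst ` C"
| "pobj PIdF X = VVar ` X"
| "pobj (PProdF F G) X = {VPair u v | u v. u \<in> pobj F X \<and> v \<in> pobj G X}"
| "pobj (PCoprodF I Fs) X = {VInj i u | i u. i \<in> I \<and> u \<in> pobj (Fs i) X}"

definition pact :: "((nat \<Rightarrow> nat) \<Rightarrow> 'c \<Rightarrow> 'c) \<Rightarrow> ((nat \<Rightarrow> nat) \<Rightarrow> 'x \<Rightarrow> 'x) \<Rightarrow>
    (nat \<Rightarrow> nat) \<Rightarrow> ('c, 'i, 'x) pv \<Rightarrow> ('c, 'i, 'x) pv" where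
  "pact ac ax p = map_pv (ac p) id (ax p)"

definition pmap :: "('x \<Rightarrow> 'y) \<Rightarrow> ('c, 'i, 'x) pv \<Rightarrow> ('c, 'i, 'y) pv" where
  "pmap h = map_pv id id h"

text \<open>The canonical extension to Kl(P_fs), built along the grammar:
  constants and identity trivially, coproducts via [T inj_i]_i, products via
  the double strength d(A,B) = A \<times> B.\<close>
primrec pext :: "('c, 'i) pf \<Rightarrow> ('x \<Rightarrow> 'y set) \<Rightarrow> ('c, 'i, 'x) pv \<Rightarrow> ('c, 'i, 'y) pv set" where
  "pext (PConstF C) f v = (case v of VConst c \<Rightarrow> {VConst c} | _ \<Rightarrow> {})"
| "pext PIdF f v = (case v of VVar x \<Rightarrow> VVar ` f x | _ \<Rightarrow> {})"
| "pext (PProdF F G) f v = (case v of VPair a b \<Rightarrow>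
      {VPair a' b' | a' b'. a' \<in> pext F f a \<and> b' \<in> pext G f b} | _ \<Rightarrow> {})"
| "pext (PCoprodF I Fs) f v = (case v of VInj i u \<Rightarrow>
      (if i \<in> I then VInj i ` pext (Fs i) f u else {}) | _ \<Rightarrow> {})"

end

theory Submission
  imports Defs
begin

text \<open>In the product case the laws of the extension reduce to properties of
  the double strength \<open>d(A, B) = A \<times> B\<close>: it commutes with the permutation action,
  with unions (the multiplication of \<open>P\<^sub>f\<^sub>s\<close>) and with inclusion. Finite support of
  \<open>pext F f v\<close> needs no separate induction: \<open>pext F f\<close> is equivariant, and equivariant
  maps carry a support of \<open>v\<close> to a support of the image.\<close>

lemma pact_simps [simp]:
  "pact ac ax p (VConst c) = VConst (ac p c)"
  "pact ac ax p (VVar x) = VVar (ax p x)"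
  "pact ac ax p (VPair a b) = VPair (pact ac ax p a) (pact ac ax p b)"
  "pact ac ax p (VInj i u) = VInj i (pact ac ax p u)"
  by (simp_all add: pact_def)

lemma pmap_simps [simp]:
  "pmap h (VConst c) = VConst c"
  "pmap h (VVar x) = VVar (h x)"
  "pmap h (VPair a b) = VPair (pmap h a) (pmap h b)"
  "pmap h (VInj i u) = VInj i (pmap h u)"
  by (simp_all add: pmap_def)

lemma pobj_induct [consumes 1, case_names Const Var Pair Inj]:
  assumes "v \<in> pobj F X"
    and "\<And>C c. c \<in> C \<Longrightarrow> P (PConstF C) (VConst c)"
    and "\<And>x. x \<in> X \<Longrightarrow> P PIdF (VVar x)"
    and "\<And>F G a b. a \<in> pobj F X \<Longrightarrow> P F a \<Longrightarrow> b \<in> pobj G X \<Longrightarrow> P G b \<Longrightarrow>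
           P (PProdF F G) (VPair a b)"
    and "\<And>I Fs i u. i \<in> I \<Longrightarrow> u \<in> pobj (Fs i) X \<Longrightarrow> P (Fs i) u \<Longrightarrow>
           P (PCoprodF I Fs) (VInj i u)"
  shows "P F v"
  using assms(1) by (induction F arbitrary: v) (auto intro: assms(2-5))

lemma supports_equivariant_image:
  assumes "supports act T x"
    and "\<And>p. fperm p \<Longrightarrow> \<phi> (act p x) = act' p (\<phi> x)"
  shows "supports act' T (\<phi> x)"
  using assms unfolding supports_def by metis

lemma pact_id_pobj:
  "v \<in> pobj F X \<Longrightarrow> nominal_set X ax \<Longrightarrow> wf_pf ac F \<Longrightarrow> pact ac ax id v = v"
  by (induction rule: pobj_induct) (auto simp: nominal_set_def)

lemma pact_comp_pobj:
  "v \<in> pobj F X \<Longrightarrow> nominal_set X ax \<Longrightarrow> wf_pf ac F \<Longrightarrow> fperm p \<Longrightarrow> fperm q \<Longrightarrow>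
   pact ac ax (p \<circ> q) v = pact ac ax p (pact ac ax q v)"
  by (induction rule: pobj_induct) (auto simp: nominal_set_def)

lemma pact_in_pobj:
  "v \<in> pobj F X \<Longrightarrow> nominal_set X ax \<Longrightarrow> wf_pf ac F \<Longrightarrow> fperm p \<Longrightarrow>
   pact ac ax p v \<in> pobj F X"
  by (induction rule: pobj_induct) (auto simp: nominal_set_def)

lemma finite_support_pobj:
  "v \<in> pobj F X \<Longrightarrow> nominal_set X ax \<Longrightarrow> wf_pf ac F \<Longrightarrow>
   \<exists>T. finite T \<and> supports (pact ac ax) T v"
proof (induction rule: pobj_induct)
  case (Const C c)
  then obtain T where "finite T" "supports ac T c"
    unfolding wf_pf.simps nominal_set_def by blast
  moreover from \<open>supports ac T c\<close> have "supports (pact ac ax) T (VConst c)"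
    by (rule supports_equivariant_image) simp
  ultimately show ?case by (intro exI conjI)
next
  case (Var x)
  then obtain T where "finite T" "supports ax T x"
    unfolding nominal_set_def by blast
  moreover from \<open>supports ax T x\<close> have "supports (pact ac ax) T (VVar x)"
    by (rule supports_equivariant_image) simp
  ultimately show ?case by (intro exI conjI)
next
  case (Pair F G a b)
  then obtain Ta Tb where "finite Ta" "supports (pact ac ax) Ta a"
    and "finite Tb" "supports (pact ac ax) Tb b"
    by (meson wf_pf.simps(3))
  then have "finite (Ta \<union> Tb)" "supports (pact ac ax) (Ta \<union> Tb) (VPair a b)"
    by (simp_all add: supports_def)
  then show ?case by (intro exI conjI)
next
  case (Inj I Fs i u)
  then obtain T where "finite T" "supports (pact ac ax) T u"
    by (meson wf_pf.simps(4))
  moreover from \<open>supports (pact ac ax) T u\<close> have "supports (pact ac ax) T (VInj i u)"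
    by (rule supports_equivariant_image) simp
  ultimately show ?case by (intro exI conjI)
qed

lemma nominal_set_pobj:
  assumes "nominal_set X ax" "wf_pf ac F"
  shows "nominal_set (pobj F X) (pact ac ax)"
  unfolding nominal_set_def[of "pobj F X"]
  using pact_id_pobj pact_comp_pobj pact_in_pobj finite_support_pobj assms by auto

lemma pmap_in_pobj:
  "v \<in> pobj F X \<Longrightarrow> (\<And>x. x \<in> X \<Longrightarrow> h x \<in> Y) \<Longrightarrow> pmap h v \<in> pobj F Y"
  by (induction rule: pobj_induct) auto

lemma pmap_pact:
  "v \<in> pobj F X \<Longrightarrow> (\<And>x. x \<in> X \<Longrightarrow> h (ax p x) = ay p (h x)) \<Longrightarrow>
   pmap h (pact ac ax p v) = pact ac ay p (pmap h v)"
  by (induction rule: pobj_induct) auto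

lemma equivariant_pmap:
  "equivariant X ax Y ay h \<Longrightarrow>
   equivariant (pobj F X) (pact ac ax) (pobj F Y) (pact ac ay) (pmap h)"
  unfolding equivariant_def by (blast intro: pmap_in_pobj pmap_pact)

text \<open>The double strength \<open>d\<close>, composed with the pairing constructor of values.\<close>

definition vpairs :: "('c, 'i, 'x) pv set \<Rightarrow> ('c, 'i, 'x) pv set \<Rightarrow> ('c, 'i, 'x) pv set" where
  "vpairs A B = {VPair a b | a b. a \<in> A \<and> b \<in> B}"

lemma pext_PProdF_VPair [simp]:
  "pext (PProdF F G) f (VPair a b) = vpairs (pext F f a) (pext G f b)"
  by (simp add: vpairs_def)

declare pext.simps(3) [simp del]

lemma vpairs_singleton [simp]: "vpairs {a} {b} = {VPair a b}"
  by (auto simp: vpairs_def)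

lemma image_pact_vpairs:
  "pact ac ax p ` vpairs A B = vpairs (pact ac ax p ` A) (pact ac ax p ` B)"
  unfolding vpairs_def by (auto intro!: image_eqI[where x="VPair _ _"])

lemma vpairs_UN:
  "vpairs (\<Union>a\<in>A. g a) (\<Union>b\<in>B. h b) = (\<Union>a\<in>A. \<Union>b\<in>B. vpairs (g a) (h b))"
  unfolding vpairs_def by blast

lemma UN_vpairs: "(\<Union>v\<in>vpairs A B. k v) = (\<Union>a\<in>A. \<Union>b\<in>B. k (VPair a b))"
  unfolding vpairs_def by blast

lemma pext_subset_pobj:
  "v \<in> pobj F X \<Longrightarrow> (\<And>x. x \<in> X \<Longrightarrow> f x \<subseteq> Y) \<Longrightarrow> pext F f v \<subseteq> pobj F Y"
  by (induction rule: pobj_induct) (auto simp: vpairs_def)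

lemma pext_pact:
  "v \<in> pobj F X \<Longrightarrow> (\<And>x. x \<in> X \<Longrightarrow> f (ax p x) = ay p ` f x) \<Longrightarrow>
   pext F f (pact ac ax p v) = pact ac ay p ` pext F f v"
  by (induction rule: pobj_induct) (auto simp: image_pact_vpairs image_image)

lemma kl_mor_pext:
  assumes f: "kl_mor X ax Y ay f" and "nominal_set X ax" "wf_pf ac F"
  shows "kl_mor (pobj F X) (pact ac ax) (pobj F Y) (pact ac ay) (pext F f)"
proof -
  have f_into: "f x \<subseteq> Y" if "x \<in> X" for x
    using f that by (simp add: kl_mor_def fs_subset_def)
  have f_equivariant: "f (ax p x) = ay p ` f x" if "fperm p" "x \<in> X" for p x
    using f that by (simp add: kl_mor_def set_act_def)
  have pext_equivariant: "pext F f (pact ac ax p v) = set_act (pact ac ay) p (pext F f v)"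
    if "fperm p" "v \<in> pobj F X" for p v
    using that by (simp add: pext_pact f_equivariant set_act_def)
  have "\<exists>T. finite T \<and> supports (set_act (pact ac ay)) T (pext F f v)" if "v \<in> pobj F X" for v
  proof -
    obtain T where "finite T" "supports (pact ac ax) T v"
      using finite_support_pobj[OF \<open>v \<in> pobj F X\<close> assms(2,3)] by blast
    moreover from \<open>supports (pact ac ax) T v\<close>
    have "supports (set_act (pact ac ay)) T (pext F f v)"
      by (rule supports_equivariant_image[where \<phi> = "pext F f"])
        (rule pext_equivariant[OF _ that])
    ultimately show ?thesis by (intro exI conjI)
  qed
  moreover have "pext F f v \<subseteq> pobj F Y" if "v \<in> pobj F X" for v
    using pext_subset_pobj[OF that f_into] .
  ultimately show ?thesis
    using pext_equivariant by (simp add: kl_mor_def fs_subset_def)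
qed

lemma pext_kl_id: "v \<in> pobj F X \<Longrightarrow> pext F kl_id v = kl_id v"
  by (induction rule: pobj_induct) (auto simp: kl_id_def)

lemma pext_kl_comp:
  "v \<in> pobj F X \<Longrightarrow> pext F (kl_comp g f) v = kl_comp (pext F g) (pext F f) v"
  by (induction rule: pobj_induct) (auto simp: kl_comp_def vpairs_UN UN_vpairs)

lemma pext_J: "v \<in> pobj F X \<Longrightarrow> pext F (J h) v = J (pmap h) v"
  by (induction rule: pobj_induct) (auto simp: J_def)

lemma pext_mono:
  "v \<in> pobj F X \<Longrightarrow> (\<And>x. x \<in> X \<Longrightarrow> f x \<subseteq> g x) \<Longrightarrow> pext F f v \<subseteq> pext F g v"
  by (induction rule: pobj_induct) (auto simp: vpairs_def)

theorem corollary3p14: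
  fixes F :: "('c, 'i) pf"
    and ac :: "(nat \<Rightarrow> nat) \<Rightarrow> 'c \<Rightarrow> 'c"
  assumes "wf_pf ac F"
  shows
    \<comment> \<open>F is an endofunctor on Nom\<close>
    "(\<forall>(X :: 'x set) ax. nominal_set X ax \<longrightarrow> nominal_set (pobj F X) (pact ac ax))
     \<and> (\<forall>(X :: 'x set) ax (Y :: 'y set) ay h. nominal_set X ax \<and> nominal_set Y ay
          \<and> equivariant X ax Y ay h \<longrightarrow>
          equivariant (pobj F X) (pact ac ax) (pobj F Y) (pact ac ay) (pmap h))
     \<comment> \<open>the canonical extension maps Kleisli morphisms to Kleisli morphisms\<close>
     \<and> (\<forall>(X :: 'x set) ax (Y :: 'y set) ay f. nominal_set X ax \<and> nominal_set Y ay
          \<and> kl_mor X ax Y ay f \<longrightarrow>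
          kl_mor (pobj F X) (pact ac ax) (pobj F Y) (pact ac ay) (pext F f))
     \<comment> \<open>it preserves identities\<close>
     \<and> (\<forall>(X :: 'x set) ax. nominal_set X ax \<longrightarrow>
          (\<forall>v\<in>pobj F X. pext F (kl_id :: 'x \<Rightarrow> 'x set) v = kl_id v))
     \<comment> \<open>it preserves Kleisli composition\<close>
     \<and> (\<forall>(X :: 'x set) ax (Y :: 'y set) ay (Z :: 'z set) az f g.
          nominal_set X ax \<and> nominal_set Y ay \<and> nominal_set Z az
          \<and> kl_mor X ax Y ay f \<and> kl_mor Y ay Z az g \<longrightarrow>
          (\<forall>v\<in>pobj F X. pext F (kl_comp g f) v = kl_comp (pext F g) (pext F f) v))
     \<comment> \<open>it is an extension: Fbar J = J F\<close>
     \<and> (\<forall>(X :: 'x set) ax (Y :: 'y set) ay h. nominal_set X ax \<and> nominal_set Y ay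
          \<and> equivariant X ax Y ay h \<longrightarrow>
          (\<forall>v\<in>pobj F X. pext F (J h) v = J (pmap h) v))
     \<comment> \<open>it is locally monotone\<close>
     \<and> (\<forall>(X :: 'x set) ax (Y :: 'y set) ay f g. nominal_set X ax \<and> nominal_set Y ay
          \<and> kl_mor X ax Y ay f \<and> kl_mor X ax Y ay g \<and> (\<forall>x\<in>X. f x \<subseteq> g x) \<longrightarrow>
          (\<forall>v\<in>pobj F X. pext F f v \<subseteq> pext F g v))"
proof (intro conjI allI impI ballI)
  fix X :: "'x set" and ax
  assume "nominal_set X ax"
  then show "nominal_set (pobj F X) (pact ac ax)"
    using assms by (rule nominal_set_pobj)
next
  fix X :: "'x set" and ax and Y :: "'y set" and ay and h
  assume "nominal_set X ax \<and> nominal_set Y ay \<and> equivariant X ax Y ay h"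
  then show "equivariant (pobj F X) (pact ac ax) (pobj F Y) (pact ac ay) (pmap h)"
    by (blast intro: equivariant_pmap)
next
  fix X :: "'x set" and ax and Y :: "'y set" and ay and f
  assume "nominal_set X ax \<and> nominal_set Y ay \<and> kl_mor X ax Y ay f"
  then show "kl_mor (pobj F X) (pact ac ax) (pobj F Y) (pact ac ay) (pext F f)"
    using assms by (blast intro: kl_mor_pext)
qed (simp_all add: pext_kl_id pext_kl_comp pext_J pext_mono)

end
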